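(* For $n\in\{3,4\}$ and every $\delta>0$, there exists a cake-cutting instance with $n$ players exhibiting an $\alpha$-dumping paradox with respect to the egalitarian welfare (for connected divisions) with $\alpha\ge \frac n2-\delta$.
   Context: A cake is the interval $[0,1]$. There are $n$ players $1,\dots,n$; each player $i$ has a valuation $v_i$, a nonatomic countably additive probability measure on the Borel subsets of $[0,1]$. A (connected) division $x$ is a sequence $(X_1,\dots,X_n)$ of pairwise disjoint open intervals of $[0,1]$ (possibly empty), $X_i$ being the piece of player $i$; it is complete if the union of the closures of the $X_i$ equals $[0,1]$, and partial otherwise. Write $u_i(x,j)=v_i(X_j)$. $x$ is envy-free if $u_i(x,i)\ge u_i(x,j)$ for all $i,j$. Egalitarian welfare: $eg(x)=\min_i u_i(x,i)$. For $\alpha>1$, an instance exhibits an egalitarian $\alpha$-dumping paradox if there exists an envy-free partial division $y$ such that $eg(y)\ge \alpha\,eg(x)$ for every envy-free complete division $x$. *)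

theory Defs
  imports "HOL-Probability.Probability"
begin

definition nonatomic :: "'a measure \<Rightarrow> bool" where
  "nonatomic M \<longleftrightarrow> (\<forall>A\<in>sets M. emeasure M A > 0 \<longrightarrow>
      (\<exists>B\<in>sets M. B \<subseteq> A \<and> 0 < emeasure M B \<and> emeasure M B < emeasure M A))"

definition valuation :: "real measure \<Rightarrow> bool" where
  "valuation v \<longleftrightarrow> prob_space v \<and> space v = {0..1}
     \<and> sets v = sets (restrict_space borel {0..1}) \<and> nonatomic v"

definition cake_instance :: "nat \<Rightarrow> (nat \<Rightarrow> real measure) \<Rightarrow> bool" where
  "cake_instance n v \<longleftrightarrow> (\<forall>i<n. valuation (v i))"

definition open_subinterval :: "real set \<Rightarrow> bool" where
  "open_subinterval X \<longleftrightarrow> (\<exists>a b. 0 \<le> a \<and> a \<le> b \<and> b \<le> 1 \<and> X = {a<..<b})"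

definition division :: "nat \<Rightarrow> (nat \<Rightarrow> real set) \<Rightarrow> bool" where
  "division n X \<longleftrightarrow> (\<forall>i<n. open_subinterval (X i))
      \<and> (\<forall>i<n. \<forall>j<n. i \<noteq> j \<longrightarrow> X i \<inter> X j = {})"

definition complete_division :: "nat \<Rightarrow> (nat \<Rightarrow> real set) \<Rightarrow> bool" where
  "complete_division n X \<longleftrightarrow> division n X \<and> (\<Union>i<n. closure (X i)) = {0..1}"

definition partial_division :: "nat \<Rightarrow> (nat \<Rightarrow> real set) \<Rightarrow> bool" where
  "partial_division n X \<longleftrightarrow> division n X \<and> \<not> complete_division n X"

definition u :: "(nat \<Rightarrow> real measure) \<Rightarrow> (nat \<Rightarrow> real set) \<Rightarrow> nat \<Rightarrow> nat \<Rightarrow> real" where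
  "u v X i j = measure (v i) (X j)"

definition envy_free :: "nat \<Rightarrow> (nat \<Rightarrow> real measure) \<Rightarrow> (nat \<Rightarrow> real set) \<Rightarrow> bool" where
  "envy_free n v X \<longleftrightarrow> (\<forall>i<n. \<forall>j<n. u v X i i \<ge> u v X i j)"

definition eg :: "nat \<Rightarrow> (nat \<Rightarrow> real measure) \<Rightarrow> (nat \<Rightarrow> real set) \<Rightarrow> real" where
  "eg n v X = Min ((\<lambda>i. u v X i i) ` {..<n})"

definition egalitarian_dumping_paradox ::
  "nat \<Rightarrow> (nat \<Rightarrow> real measure) \<Rightarrow> real \<Rightarrow> bool" where
  "egalitarian_dumping_paradox n v \<alpha> \<longleftrightarrow> \<alpha> > 1 \<and>
     (\<exists>Y. partial_division n Y \<and> envy_free n v Y \<and>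
        (\<forall>X. complete_division n X \<and> envy_free n v X \<longrightarrow> eg n v Y \<ge> \<alpha> * eg n v X))"

end

theory Submission
  imports Defs
begin

text \<open>Valuations are given by continuous piecewise linear distribution functions on a grid of
  \<open>2n - 1\<close> equal slots. Player R puts weight \<open>2e\<close> on the first slot and \<open>1/2 - e\<close> on the second
  and on the last; one or two blockers own the slots 4 (and 6); Q spreads its mass evenly over the
  remaining slots except the first. Dumping the first slot gives an envy-free partial division in
  which everybody gets at least \<open>1/2 - e\<close>. In a complete envy-free division in which everybody
  gets more than \<open>1/n + 3e\<close>, the blockers force Q to their left. If R is right of Q, then Q holds
  the first slot and reaches beyond the second, so R envies Q. If R is left of Q, then the last
  blocker holds the last slot, so R values its own piece at least at \<open>1/2 - e\<close>; this pushes Q's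
  piece so far right that Q gets at most \<open>1/n + 3e\<close>. Letting \<open>e \<rightarrow> 0\<close> gives ratios tending
  to \<open>n/2\<close>.\<close>

section \<open>Measures from continuous distribution functions\<close>

definition ramp :: "real \<Rightarrow> real \<Rightarrow> real \<Rightarrow> real" where
  "ramp x y t = max 0 (min 1 ((t - x) / (y - x)))"

lemma ramp_mono: "x < y \<Longrightarrow> s \<le> t \<Longrightarrow> ramp x y s \<le> ramp x y t"
  unfolding ramp_def by (intro max.mono min.mono order_refl divide_right_mono) auto

lemma continuous_on_ramp: "x < y \<Longrightarrow> continuous_on UNIV (ramp x y)"
  unfolding ramp_def by (intro continuous_intros) auto

lemma ramp_eq_0: "x < y \<Longrightarrow> t \<le> x \<Longrightarrow> ramp x y t = 0"
  unfolding ramp_def by (simp add: divide_nonpos_pos)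

lemma ramp_eq_1: "x < y \<Longrightarrow> y \<le> t \<Longrightarrow> ramp x y t = 1"
  unfolding ramp_def by (auto simp: min_def)

lemma ramp_bounds: "0 \<le> ramp x y t" "ramp x y t \<le> 1"
  unfolding ramp_def by auto

lemma ramp_increase_imp_overlap:
  assumes "x < y" "a \<le> b" "ramp x y a < ramp x y b"
  shows "a < y" "x < b"
  using assms ramp_bounds[of x y] ramp_eq_0[of x y] ramp_eq_1[of x y]
  by (smt (verit))+

definition cake_cdf :: "(real \<Rightarrow> real) \<Rightarrow> real \<Rightarrow> bool" where
  "cake_cdf F c \<longleftrightarrow> mono F \<and> continuous_on UNIV F \<and> (\<forall>t\<le>0. F t = 0) \<and> (\<forall>t\<ge>1. F t = c)"

lemma cake_cdf_scaled_ramp: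
  "0 \<le> x \<Longrightarrow> x < y \<Longrightarrow> y \<le> 1 \<Longrightarrow> 0 \<le> c \<Longrightarrow> cake_cdf (\<lambda>t. c * ramp x y t) c"
  unfolding cake_cdf_def mono_def
  by (auto intro!: mult_left_mono ramp_mono continuous_intros continuous_on_ramp
      simp: ramp_eq_0 ramp_eq_1)

lemma cake_cdf_add: "cake_cdf F c \<Longrightarrow> cake_cdf G d \<Longrightarrow> cake_cdf (\<lambda>t. F t + G t) (c + d)"
  unfolding cake_cdf_def mono_def by (auto intro!: add_mono continuous_intros)

lemma cake_cdf_mono: "cake_cdf F c \<Longrightarrow> x \<le> y \<Longrightarrow> F x \<le> F y"
  unfolding cake_cdf_def mono_def by blast

lemma continuous_on_dist_le:
  fixes f g :: "'a::metric_space \<Rightarrow> 'b::metric_space"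
  assumes "continuous_on UNIV f" and "\<And>s t. dist (g s) (g t) \<le> dist (f s) (f t)"
  shows "continuous_on UNIV g"
  unfolding continuous_on_iff
proof (intro ballI allI impI)
  fix x :: 'a and e :: real
  assume "0 < e"
  then obtain d where d: "0 < d" "\<And>y. dist y x < d \<Longrightarrow> dist (f y) (f x) < e"
    using assms(1) unfolding continuous_on_iff by blast
  have "dist (g y) (g x) < e" if "dist y x < d" for y
    using assms(2)[of y x] d(2)[OF that] by linarith
  then show "\<exists>d>0. \<forall>y\<in>UNIV. dist y x < d \<longrightarrow> dist (g y) (g x) < e"
    using d(1) by blast
qed

definition cake_measure :: "(real \<Rightarrow> real) \<Rightarrow> real measure" where
  "cake_measure F = restrict_space (interval_measure F) {0..1}"

context
  fixes F :: "real \<Rightarrow> real"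
  assumes F: "cake_cdf F 1"
begin

lemma continuous_at_right_cdf: "continuous (at_right a) F"
  using F unfolding cake_cdf_def
  by (meson UNIV_I continuous_on_eq_continuous_within continuous_within_subset subset_UNIV)

lemma measure_interval_measure_Ioc_cdf: "a \<le> b \<Longrightarrow> measure (interval_measure F) {a<..b} = F b - F a"
  by (intro measure_interval_measure_Ioc continuous_at_right_cdf cake_cdf_mono[OF F])

lemma finite_measure_interval_measure: "finite_measure (interval_measure F)"
proof -
  have "(F \<longlongrightarrow> 0) at_bot"
    using F unfolding cake_cdf_def
    by (auto intro!: tendsto_eventually exI[of _ 0] simp: eventually_at_bot_linorder)
  moreover have "(F \<longlongrightarrow> 1) at_top"
    using F unfolding cake_cdf_def
    by (auto intro!: tendsto_eventually exI[of _ 1] simp: eventually_at_top_linorder)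
  ultimately have "real_distribution (interval_measure F)"
    by (intro real_distribution_interval_measure continuous_at_right_cdf cake_cdf_mono[OF F])
  then show ?thesis
    by (simp add: real_distribution_def prob_space_def)
qed

interpretation M: finite_measure "interval_measure F"
  by (rule finite_measure_interval_measure)

lemma measure_interval_measure_Ioo: "a \<le> b \<Longrightarrow> measure (interval_measure F) {a<..<b} = F b - F a"
proof -
  assume "a \<le> b"
  have "emeasure (interval_measure F) {b..b} = 0"
    using emeasure_interval_measure_Icc[of b b F] F by (simp add: cake_cdf_def mono_def)
  then have "measure (interval_measure F) {b} = 0"
    by (simp add: measure_def)
  moreover have "{a<..<b} = {a<..b} - {b}"
    by auto
  ultimately show ?thesis
    using \<open>a \<le> b\<close> measure_interval_measure_Ioc_cdf M.finite_measure_Diff[of "{a<..b}" "{b}"]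
    by (cases "a = b") auto
qed

lemma measure_cake_measure: "A \<subseteq> {0..1} \<Longrightarrow> measure (cake_measure F) A = measure (interval_measure F) A"
  unfolding cake_measure_def by (rule measure_restrict_space) auto

lemma measure_cake_measure_Ioo:
  "0 \<le> a \<Longrightarrow> a \<le> b \<Longrightarrow> b \<le> 1 \<Longrightarrow> measure (cake_measure F) {a<..<b} = F b - F a"
  by (subst measure_cake_measure) (auto simp: measure_interval_measure_Ioo)

lemma prob_space_cake_measure: "prob_space (cake_measure F)"
proof -
  have "emeasure (interval_measure F) {0..1} = 1"
    using F emeasure_interval_measure_Icc[of 0 1 F] by (simp add: cake_cdf_def mono_def)
  then show ?thesis
    unfolding cake_measure_def by (intro prob_space_restrict_space) auto
qed

lemma continuous_on_measure_Int_atMost: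
  assumes A: "A \<in> sets borel"
  shows "continuous_on UNIV (\<lambda>t. measure (interval_measure F) (A \<inter> {..t}))"
proof -
  define g where "g t = measure (interval_measure F) (A \<inter> {..t})" for t
  have increment: "\<bar>g t - g s\<bar> \<le> F t - F s" if "s \<le> t" for s t
  proof -
    have "g t - g s = measure (interval_measure F) (A \<inter> {..t} - A \<inter> {..s})"
      unfolding g_def using A \<open>s \<le> t\<close> by (subst M.finite_measure_Diff) auto
    also have "A \<inter> {..t} - A \<inter> {..s} = A \<inter> {s<..t}" by auto
    also have "measure (interval_measure F) (A \<inter> {s<..t}) \<le> measure (interval_measure F) {s<..t}"
      by (rule M.finite_measure_mono) auto
    finally have "g t - g s \<le> F t - F s"
      using measure_interval_measure_Ioc_cdf[OF \<open>s \<le> t\<close>] by simp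
    moreover have "g s \<le> g t"
      unfolding g_def using A \<open>s \<le> t\<close> by (intro M.finite_measure_mono) auto
    ultimately show ?thesis
      by simp
  qed
  have "dist (g s) (g t) \<le> dist (F s) (F t)" for s t
    using increment[of s t] increment[of t s]
    by (cases "s \<le> t") (auto simp: dist_real_def abs_minus_commute)
  moreover have "continuous_on UNIV F"
    using F by (simp add: cake_cdf_def)
  ultimately have "continuous_on UNIV g"
    using continuous_on_dist_le[of F g] by blast
  then show ?thesis
    unfolding g_def .
qed

lemma sets_cake_measure_iff: "A \<in> sets (cake_measure F) \<longleftrightarrow> A \<in> sets borel \<and> A \<subseteq> {0..1}"
  unfolding cake_measure_def by (subst sets_restrict_space_iff) auto

lemma emeasure_cake_measure:
  "A \<subseteq> {0..1} \<Longrightarrow> emeasure (cake_measure F) A = ennreal (measure (interval_measure F) A)"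
  unfolding cake_measure_def by (simp add: emeasure_restrict_space M.emeasure_eq_measure)

lemma nonatomic_cake_measure: "nonatomic (cake_measure F)"
  unfolding nonatomic_def
proof (intro ballI impI)
  fix A assume A: "A \<in> sets (cake_measure F)" and pos: "0 < emeasure (cake_measure F) A"
  have A01: "A \<subseteq> {0..1}" and A_borel: "A \<in> sets borel"
    using A by (simp_all add: sets_cake_measure_iff)
  define m where "m = measure (interval_measure F) A"
  define g where "g t = measure (interval_measure F) (A \<inter> {..t})" for t
  have "A \<inter> {..-1} = {}" "A \<inter> {..1} = A"
    using A01 by auto
  then have "g (-1) = 0" "g 1 = m"
    unfolding g_def m_def by simp_all
  moreover have m_pos: "0 < m"
    using pos by (simp add: emeasure_cake_measure[OF A01] m_def)
  moreover have "continuous_on {-1..1} g"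
    unfolding g_def by (rule continuous_on_subset[OF continuous_on_measure_Int_atMost[OF A_borel]]) simp
  ultimately obtain x where x: "g x = m / 2"
    using IVT'[of g "-1" "m / 2" 1] by auto
  have "A \<inter> {..x} \<in> sets (cake_measure F)"
    using A_borel by (simp add: sets_cake_measure_iff) (use A01 in blast)
  moreover have "emeasure (cake_measure F) (A \<inter> {..x}) = ennreal (m / 2)"
    using A01 x by (subst emeasure_cake_measure) (auto simp: g_def)
  ultimately show "\<exists>B\<in>sets (cake_measure F). B \<subseteq> A \<and> 0 < emeasure (cake_measure F) B
      \<and> emeasure (cake_measure F) B < emeasure (cake_measure F) A"
    using m_pos emeasure_cake_measure[OF A01]
    by (intro bexI[of _ "A \<inter> {..x}"]) (auto simp: m_def ennreal_less_iff)
qed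

lemma valuation_cake_measure: "valuation (cake_measure F)"
proof -
  have "sets (cake_measure F) = sets (restrict_space borel {0..1})"
    unfolding cake_measure_def by (rule sets_restrict_space_cong) simp
  moreover have "space (cake_measure F) = {0..1}"
    by (simp add: cake_measure_def space_restrict_space)
  ultimately show ?thesis
    unfolding valuation_def using prob_space_cake_measure nonatomic_cake_measure by blast
qed

end

lemma cake_instance_cake_measures:
  "(\<And>i. i < n \<Longrightarrow> cake_cdf (F i) 1) \<Longrightarrow> cake_instance n (\<lambda>i. cake_measure (F i))"
  unfolding cake_instance_def by (simp add: valuation_cake_measure)

lemma u_cake_measures:
  assumes "cake_cdf (F i) 1" and "X j = {a<..<b}" and "0 \<le> a" "a \<le> b" "b \<le> 1"
  shows "u (\<lambda>i. cake_measure (F i)) X i j = F i b - F i a"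
  unfolding u_def using assms by (simp add: measure_cake_measure_Ioo)

section \<open>Divisions described by endpoints\<close>

text \<open>Of completeness only the two ends of the cake are kept: some nonempty piece starts at 0 and
  some nonempty piece ends at 1.\<close>

definition complete_division_ends :: "nat \<Rightarrow> (nat \<Rightarrow> real) \<Rightarrow> (nat \<Rightarrow> real) \<Rightarrow> bool" where
  "complete_division_ends n a b \<longleftrightarrow>
     (\<forall>i<n. 0 \<le> a i \<and> a i \<le> b i \<and> b i \<le> 1)
     \<and> (\<forall>i<n. \<forall>j<n. i \<noteq> j \<longrightarrow> a i < b i \<longrightarrow> a j < b j \<longrightarrow> b i \<le> a j \<or> b j \<le> a i)
     \<and> (\<exists>i<n. a i = 0 \<and> a i < b i) \<and> (\<exists>i<n. b i = 1 \<and> a i < b i)"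

lemma complete_division_endsD:
  assumes "complete_division_ends n a b"
  shows "\<And>i. i < n \<Longrightarrow> 0 \<le> a i" "\<And>i. i < n \<Longrightarrow> a i \<le> b i" "\<And>i. i < n \<Longrightarrow> b i \<le> 1"
    and "\<And>i j. i < n \<Longrightarrow> j < n \<Longrightarrow> i \<noteq> j \<Longrightarrow> a i < b i \<Longrightarrow> a j < b j \<Longrightarrow> b i \<le> a j \<or> b j \<le> a i"
    and "\<exists>i<n. a i = 0 \<and> a i < b i" "\<exists>i<n. b i = 1 \<and> a i < b i"
  using assms unfolding complete_division_ends_def by blast+

lemma complete_division_ends_nonempty:
  fixes G :: "real \<Rightarrow> real"
  assumes "complete_division_ends n a b" "i < n" "0 \<le> c" "c < G (b i) - G (a i)"
  shows "a i < b i"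
  using assms complete_division_endsD(2)[of n a b i] by (cases "a i = b i") auto

lemma disjoint_Ioo_imp_ordered:
  fixes a b c d :: real
  assumes "a < b" "c < d" "{a<..<b} \<inter> {c<..<d} = {}"
  shows "b \<le> c \<or> d \<le> a"
proof (rule ccontr)
  assume "\<not> (b \<le> c \<or> d \<le> a)"
  then have "(max a c + min b d) / 2 \<in> {a<..<b} \<inter> {c<..<d}"
    using assms by auto
  then show False
    using assms by blast
qed

lemma complete_division_obtain_ends:
  assumes X: "complete_division n X"
  obtains a b where "complete_division_ends n a b" "\<And>i. i < n \<Longrightarrow> X i = {a i<..<b i}"
proof -
  have "\<forall>i\<in>{..<n}. \<exists>p. 0 \<le> fst p \<and> fst p \<le> snd p \<and> snd p \<le> 1 \<and> X i = {fst p<..<snd p}"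
    using X unfolding complete_division_def division_def open_subinterval_def by force
  then obtain p where p: "\<And>i. i < n \<Longrightarrow> 0 \<le> fst (p i) \<and> fst (p i) \<le> snd (p i) \<and> snd (p i) \<le> 1
      \<and> X i = {fst (p i)<..<snd (p i)}"
    by (metis lessThan_iff)
  define a where "a i = fst (p i)" for i
  define b where "b i = snd (p i)" for i
  have X_ab: "X i = {a i<..<b i}" and ab: "0 \<le> a i" "a i \<le> b i" "b i \<le> 1" if "i < n" for i
    using p[OF that] by (simp_all add: a_def b_def)
  have covers: "\<exists>i<n. a i < b i \<and> a i \<le> x \<and> x \<le> b i" if "x \<in> {0..1}" for x
  proof -
    have "x \<in> (\<Union>i<n. closure (X i))"
      using X that unfolding complete_division_def by blast
    then obtain i where i: "i < n" "x \<in> closure (X i)"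
      by blast
    then have "a i < b i"
      using X_ab[OF i(1)] by (cases "a i < b i") auto
    then show ?thesis
      using i X_ab[OF i(1)] by (auto simp: closure_greaterThanLessThan)
  qed
  have "complete_division_ends n a b"
    unfolding complete_division_ends_def
  proof (intro conjI allI impI)
    show "\<exists>i<n. a i = 0 \<and> a i < b i"
      using covers[of 0] ab by (force intro: order_antisym)
    show "\<exists>i<n. b i = 1 \<and> a i < b i"
      using covers[of 1] ab by (force intro: order_antisym)
  next
    fix i j assume "i < n" "j < n" "i \<noteq> j" "a i < b i" "a j < b j"
    then show "b i \<le> a j \<or> b j \<le> a i"
      using X X_ab unfolding complete_division_def division_def
      by (intro disjoint_Ioo_imp_ordered) auto
  qed (use ab in auto)
  then show ?thesis
    using X_ab that by blast
qed

lemma partial_division_of_ends: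
  assumes ab: "\<forall>i<n. 0 < a i \<and> a i \<le> b i \<and> b i \<le> 1"
    and ordered: "\<forall>i<n. \<forall>j<n. i \<noteq> j \<longrightarrow> b i \<le> a j \<or> b j \<le> a i"
  shows "partial_division n (\<lambda>i. {a i<..<b i})"
proof -
  have "division n (\<lambda>i. {a i<..<b i})"
    unfolding division_def open_subinterval_def
  proof (intro conjI allI impI)
    fix i j assume "i < n" "j < n" "i \<noteq> j"
    then show "{a i<..<b i} \<inter> {a j<..<b j} = {}"
      using ordered[rule_format, of i j] by auto
  qed (use ab less_imp_le in blast)
  moreover have "0 \<notin> closure {a i<..<b i}" if "i < n" for i
    using ab that closure_greaterThanLessThan[of "a i" "b i"] by (cases "a i < b i") auto
  then have "(0::real) \<notin> (\<Union>i<n. closure {a i<..<b i})"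
    by blast
  then have "(\<Union>i<n. closure {a i<..<b i}) \<noteq> {0..1}"
    by (intro notI) simp
  ultimately show ?thesis
    unfolding partial_division_def complete_division_def by blast
qed

lemma eg_geI: "0 < n \<Longrightarrow> (\<And>i. i < n \<Longrightarrow> c \<le> u v X i i) \<Longrightarrow> c \<le> eg n v X"
  unfolding eg_def by (subst Min_ge_iff) auto

lemma eg_le: "i < n \<Longrightarrow> eg n v X \<le> u v X i i"
  unfolding eg_def by (intro Min_le) auto

definition egalitarian_gap :: "nat \<Rightarrow> (nat \<Rightarrow> real measure) \<Rightarrow> real \<Rightarrow> real \<Rightarrow> bool" where
  "egalitarian_gap n v p q \<longleftrightarrow>
     (\<exists>Y. partial_division n Y \<and> envy_free n v Y \<and> p \<le> eg n v Y)
     \<and> (\<forall>X. complete_division n X \<and> envy_free n v X \<longrightarrow> eg n v X \<le> q)"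

lemma egalitarian_dumping_paradox_if_gap:
  assumes gap: "egalitarian_gap n v p q" and "0 < q" "q < p"
  shows "egalitarian_dumping_paradox n v (p / q)"
proof -
  obtain Y where Y: "partial_division n Y" "envy_free n v Y" "p \<le> eg n v Y"
    using gap unfolding egalitarian_gap_def by blast
  have "p / q * eg n v X \<le> eg n v Y" if "complete_division n X" "envy_free n v X" for X
  proof -
    have "p / q * eg n v X \<le> p / q * q"
      using gap that assms(2,3) unfolding egalitarian_gap_def by (intro mult_left_mono) auto
    then show ?thesis
      using Y(3) assms(2) by simp
  qed
  moreover have "1 < p / q"
    using assms(2,3) by simp
  ultimately show ?thesis
    unfolding egalitarian_dumping_paradox_def using Y(1,2) by blast
qed

lemma dumping_ratio_ge:
  assumes "0 < n" "n \<le> 4" and "0 < \<delta>"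
  shows "real n / 2 - \<delta> \<le> (1/2 - min \<delta> 1 / 30) / (1 / real n + 3 * (min \<delta> 1 / 30))"
proof -
  define e where "e = min \<delta> 1 / 30"
  have e: "0 < e" "e \<le> \<delta> / 30" "e \<le> 1 / 30"
    using assms(3) by (auto simp: e_def)
  have "(real n / 2 - \<delta>) * (1 / real n + 3 * e) = 1/2 + 3/2 * real n * e - \<delta> / real n - 3 * \<delta> * e"
    using assms(1) by (simp add: field_simps)
  moreover have "\<delta> / 4 \<le> \<delta> / real n"
    using assms by (intro divide_left_mono) auto
  moreover have "0 \<le> \<delta> * e"
    using assms e by simp
  moreover have "real n * e \<le> 4 * e"
    using assms(2) e by (intro mult_right_mono) auto
  ultimately have "(real n / 2 - \<delta>) * (1 / real n + 3 * e) \<le> 1/2 - e"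
    using e by linarith
  moreover have "0 < 1 / real n + 3 * e"
    using e by (simp add: add_nonneg_pos)
  ultimately show ?thesis
    by (simp add: e_def pos_le_divide_eq)
qed

lemma eg_complete_envy_free_le:
  fixes F :: "nat \<Rightarrow> real \<Rightarrow> real"
  defines "v \<equiv> \<lambda>i. cake_measure (F i)"
  assumes "0 < n" and cdf: "\<And>i. i < n \<Longrightarrow> cake_cdf (F i) 1"
    and no_rich_division: "\<And>a b. complete_division_ends n a b
        \<Longrightarrow> \<forall>i<n. \<forall>j<n. F i (b j) - F i (a j) \<le> F i (b i) - F i (a i)
        \<Longrightarrow> \<forall>i<n. q < F i (b i) - F i (a i) \<Longrightarrow> False"
    and X: "complete_division n X" "envy_free n v X"
  shows "eg n v X \<le> q"
proof (rule ccontr)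
  assume "\<not> eg n v X \<le> q"
  then have rich: "q < u v X i i" if "i < n" for i
    using eg_le[OF that, of v X] by linarith
  obtain a b where ends: "complete_division_ends n a b" and X_ab: "\<And>i. i < n \<Longrightarrow> X i = {a i<..<b i}"
    using complete_division_obtain_ends[OF X(1)] by blast
  have u_ab: "u v X i j = F i (b j) - F i (a j)" if "i < n" "j < n" for i j
    unfolding v_def using ends that X_ab cdf
    by (intro u_cake_measures) (auto simp: complete_division_ends_def)
  show False
    using no_rich_division[OF ends] X(2) rich
    unfolding envy_free_def by (simp add: u_ab)
qed

lemma all_less_3_iff: "(\<forall>i<(3::nat). P i) \<longleftrightarrow> P 0 \<and> P 1 \<and> P 2"
  by (auto simp: numeral_eq_Suc less_Suc_eq)

lemma all_less_4_iff: "(\<forall>i<(4::nat). P i) \<longleftrightarrow> P 0 \<and> P 1 \<and> P 2 \<and> P 3"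
  by (auto simp: numeral_eq_Suc less_Suc_eq)

lemma ex_less_3_iff: "(\<exists>i<(3::nat). P i) \<longleftrightarrow> P 0 \<or> P 1 \<or> P 2"
  by (auto simp: numeral_eq_Suc less_Suc_eq)

lemma ex_less_4_iff: "(\<exists>i<(4::nat). P i) \<longleftrightarrow> P 0 \<or> P 1 \<or> P 2 \<or> P 3"
  by (auto simp: numeral_eq_Suc less_Suc_eq)

section \<open>Three players\<close>

definition Q3 :: "real \<Rightarrow> real" where
  "Q3 t = 1/3 * ramp (1/5) (2/5) t + 1/3 * ramp (2/5) (3/5) t + 1/3 * ramp (4/5) 1 t"

definition R3 :: "real \<Rightarrow> real \<Rightarrow> real" where
  "R3 e t = 2*e * ramp 0 (1/5) t + (1/2 - e) * ramp (1/5) (2/5) t + (1/2 - e) * ramp (4/5) 1 t"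

definition W3 :: "real \<Rightarrow> real" where
  "W3 = ramp (3/5) (4/5)"

lemma cake_cdf_Q3: "cake_cdf Q3 1"
  using cake_cdf_add[OF cake_cdf_add, OF cake_cdf_scaled_ramp cake_cdf_scaled_ramp cake_cdf_scaled_ramp,
      of "1/5" "2/5" "1/3" "2/5" "3/5" "1/3" "4/5" 1 "1/3"]
  by (simp add: Q3_def[abs_def])

lemma cake_cdf_R3: "0 \<le> e \<Longrightarrow> e \<le> 1/2 \<Longrightarrow> cake_cdf (R3 e) 1"
  using cake_cdf_add[OF cake_cdf_add, OF cake_cdf_scaled_ramp cake_cdf_scaled_ramp cake_cdf_scaled_ramp,
      of 0 "1/5" "2*e" "1/5" "2/5" "1/2 - e" "4/5" 1 "1/2 - e"]
  by (simp add: R3_def[abs_def])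

lemma cake_cdf_W3: "cake_cdf W3 1"
  using cake_cdf_scaled_ramp[of "3/5" "4/5" 1] by (simp add: W3_def)

lemma Q3_values: "Q3 0 = 0" "Q3 (2/5) = 1/3" "Q3 (3/5) = 2/3" "Q3 (4/5) = 2/3" "Q3 1 = 1"
  by (simp_all add: Q3_def ramp_def)

lemma R3_values: "R3 e 0 = 0" "R3 e (1/5) = 2*e" "R3 e (2/5) = 1/2 + e" "R3 e (4/5) = 1/2 + e"
    "R3 e 1 = 1"
  by (simp_all add: R3_def ramp_def)

lemma Q3_ge_if_R3_ge:
  assumes e: "0 < e" "e \<le> 1/30" and R: "1/2 - e \<le> R3 e t"
  shows "1/3 - 3*e \<le> Q3 t"
proof (cases "t \<le> 1/5")
  case True
  then have "R3 e t \<le> R3 e (1/5)"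
    using e by (intro cake_cdf_mono[OF cake_cdf_R3]) auto
  then show ?thesis
    using R e by (simp add: R3_values)
next
  case t_gt: False
  show ?thesis
  proof (cases "2/5 \<le> t")
    case True
    then have "Q3 (2/5) \<le> Q3 t"
      by (intro cake_cdf_mono[OF cake_cdf_Q3])
    then show ?thesis
      using e by (simp add: Q3_values)
  next
    case False
    define s where "s = ramp (1/5) (2/5) t"
    have "0 \<le> s" "s \<le> 1"
      unfolding s_def using ramp_bounds by auto
    moreover have "R3 e t = 2*e + (1/2 - e) * s" "Q3 t = s / 3"
      using t_gt False unfolding R3_def Q3_def s_def by (simp_all add: ramp_eq_0 ramp_eq_1)
    moreover have "1/4 * (1 - s) \<le> (1/2 - e) * (1 - s)"
      using e \<open>s \<le> 1\<close> by (intro mult_right_mono) auto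
    ultimately show ?thesis
      using R e by (simp add: right_diff_distrib)
  qed
qed

lemma Q3_left_of_W3:
  assumes e: "0 < e" and ends: "complete_division_ends 3 a b"
    and rich: "1/3 + 3*e < Q3 (b 0) - Q3 (a 0)" "1/3 + 3*e < W3 (b 2) - W3 (a 2)"
  shows "a 2 < 4/5" "3/5 < b 2" "b 0 \<le> a 2"
proof -
  have nonempty: "a 0 < b 0" "a 2 < b 2"
    using complete_division_ends_nonempty[OF ends _ _ rich(1)]
      complete_division_ends_nonempty[OF ends _ _ rich(2)] e
    by simp_all
  show W_meets: "a 2 < 4/5" "3/5 < b 2"
    using ramp_increase_imp_overlap[of "3/5" "4/5" "a 2" "b 2"] rich(2) e complete_division_endsD(2)[OF ends]
    by (simp_all add: W3_def)
  show "b 0 \<le> a 2"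
  proof (rule ccontr)
    assume "\<not> b 0 \<le> a 2"
    then have "3/5 \<le> a 0"
      using complete_division_endsD(4)[OF ends, of 0 2] nonempty W_meets by auto
    then have "Q3 (3/5) \<le> Q3 (a 0)" "Q3 (b 0) \<le> Q3 1"
      using complete_division_endsD(3)[OF ends, of 0] by (auto intro!: cake_cdf_mono[OF cake_cdf_Q3])
    then show False
      using rich(1) e Q3_values by simp
  qed
qed

lemma no_rich_envy_free_ends_3:
  assumes e: "0 < e" "e \<le> 1/30"
    and ends: "complete_division_ends 3 a b"
    and R_envy_free: "\<forall>j<3. R3 e (b j) - R3 e (a j) \<le> R3 e (b 1) - R3 e (a 1)"
    and rich: "1/3 + 3*e < Q3 (b 0) - Q3 (a 0)" "1/3 + 3*e < R3 e (b 1) - R3 e (a 1)"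
      "1/3 + 3*e < W3 (b 2) - W3 (a 2)"
  shows False
proof -
  note bounds = complete_division_endsD(1-3)[OF ends]
  note mono_Q = cake_cdf_mono[OF cake_cdf_Q3]
  have "cake_cdf (R3 e) 1"
    using e by (intro cake_cdf_R3) auto
  note mono_R = cake_cdf_mono[OF this]
  have nonempty: "a 0 < b 0" "a 1 < b 1" "a 2 < b 2"
    using complete_division_ends_nonempty[OF ends _ _ rich(1)]
      complete_division_ends_nonempty[OF ends _ _ rich(2)]
      complete_division_ends_nonempty[OF ends _ _ rich(3)] e
    by simp_all
  note W = Q3_left_of_W3[OF e(1) ends rich(1,3)]
  from complete_division_endsD(4)[OF ends, of 0 1] nonempty(1,2)
  consider "b 0 \<le> a 1" | "b 1 \<le> a 0"
    by auto
  then show False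
  proof cases
    case 1
    have "a 0 = 0"
      using complete_division_endsD(5)[OF ends] 1 W(3) nonempty bounds[of 0]
      by (auto simp: ex_less_3_iff)
    have "2/5 < b 0"
    proof (rule ccontr)
      assume "\<not> 2/5 < b 0"
      then have "Q3 (b 0) \<le> Q3 (2/5)"
        by (intro mono_Q) auto
      then show False
        using rich(1) e Q3_values \<open>a 0 = 0\<close> by simp
    qed
    then have "R3 e (2/5) \<le> R3 e (b 0)" "R3 e (2/5) \<le> R3 e (a 1)" "R3 e (b 1) \<le> R3 e 1"
      using 1 bounds[of 1] by (auto intro!: mono_R)
    then show False
      using R_envy_free[rule_format, of 0] \<open>a 0 = 0\<close> R3_values e by auto
  next
    case 2
    have "b 2 = 1"
      using complete_division_endsD(6)[OF ends] 2 W(3) nonempty bounds[of 2]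
      by (auto simp: ex_less_3_iff)
    have "R3 e (a 2) \<le> R3 e (4/5)"
      using W(1) by (intro mono_R) auto
    then have "1/2 - e \<le> R3 e (b 1) - R3 e (a 1)"
      using R_envy_free[rule_format, of 2] \<open>b 2 = 1\<close> R3_values by auto
    moreover have "0 \<le> R3 e (a 1)" "R3 e (b 1) \<le> R3 e (a 0)"
      using 2 bounds[of 1] R3_values mono_R[of 0 "a 1"] by (auto intro!: mono_R)
    ultimately have "1/3 - 3*e \<le> Q3 (a 0)"
      using e by (intro Q3_ge_if_R3_ge) auto
    moreover have "Q3 (b 0) \<le> Q3 (4/5)"
      using W(1,3) by (intro mono_Q) auto
    ultimately show False
      using rich(1) Q3_values by simp
  qed
qed

lemma egalitarian_gap_3:
  assumes e: "0 < e" "e \<le> 1/30"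
  shows "\<exists>v. cake_instance 3 v \<and> egalitarian_gap 3 v (1/2 - e) (1/3 + 3*e)"
proof -
  define F where "F = (!) [Q3, R3 e, W3]"
  define v where "v = (\<lambda>i. cake_measure (F i))"
  define a where "a = (!) [1/5, 4/5, 3/5 :: real]"
  define b where "b = (!) [3/5, 1, 4/5 :: real]"
  define Y where "Y = (\<lambda>i. {a i<..<b i})"
  have "\<forall>i<3. cake_cdf (F i) 1"
    using e cake_cdf_Q3 cake_cdf_R3[of e] cake_cdf_W3 by (simp add: all_less_3_iff F_def)
  then have cdf: "cake_cdf (F i) 1" if "i < 3" for i
    using that by blast
  have "\<forall>i<3. 0 < a i \<and> a i \<le> b i \<and> b i \<le> 1"
    "\<forall>i<3. \<forall>j<3. i \<noteq> j \<longrightarrow> b i \<le> a j \<or> b j \<le> a i"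
    by (simp_all add: all_less_3_iff a_def b_def)
  then have partial: "partial_division 3 Y" and ab: "\<And>j. j < 3 \<Longrightarrow> 0 \<le> a j \<and> a j \<le> b j \<and> b j \<le> 1"
    unfolding Y_def by (auto intro: partial_division_of_ends)
  have u_Y: "u v Y i j = F i (b j) - F i (a j)" if "i < 3" "j < 3" for i j
    unfolding v_def Y_def using cdf ab that by (intro u_cake_measures) auto
  have utilities: "\<forall>i<3. \<forall>j<3. u v Y i j \<le> u v Y i i \<and> 1/2 - e \<le> u v Y i i"
    using e by (simp add: u_Y all_less_3_iff F_def a_def b_def Q3_def R3_def W3_def ramp_def)
  have "envy_free 3 v Y" "1/2 - e \<le> eg 3 v Y"
    using utilities unfolding envy_free_def by (auto intro!: eg_geI)
  moreover have "eg 3 v X \<le> 1/3 + 3*e" if "complete_division 3 X" "envy_free 3 v X" for X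
    unfolding v_def
  proof (rule eg_complete_envy_free_le[OF _ cdf _ that[unfolded v_def]])
    fix a b
    assume ends: "complete_division_ends 3 a b"
      and "\<forall>i<3. \<forall>j<3. F i (b j) - F i (a j) \<le> F i (b i) - F i (a i)"
      and "\<forall>i<3. 1/3 + 3*e < F i (b i) - F i (a i)"
    then show False
      by (intro no_rich_envy_free_ends_3[OF e ends]) (simp_all add: all_less_3_iff F_def One_nat_def)
  qed auto
  moreover have "cake_instance 3 v"
    unfolding v_def using cdf by (rule cake_instance_cake_measures)
  ultimately show ?thesis
    unfolding egalitarian_gap_def using partial by blast
qed

section \<open>Four players\<close>

definition Q4 :: "real \<Rightarrow> real" where
  "Q4 t = 1/4 * ramp (1/7) (2/7) t + 1/4 * ramp (2/7) (3/7) t + 1/4 * ramp (4/7) (5/7) t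
    + 1/4 * ramp (6/7) 1 t"

definition R4 :: "real \<Rightarrow> real \<Rightarrow> real" where
  "R4 e t = 2*e * ramp 0 (1/7) t + (1/2 - e) * ramp (1/7) (2/7) t + (1/2 - e) * ramp (6/7) 1 t"

definition A4 :: "real \<Rightarrow> real" where
  "A4 = ramp (3/7) (4/7)"

definition B4 :: "real \<Rightarrow> real" where
  "B4 = ramp (5/7) (6/7)"

lemma cake_cdf_Q4: "cake_cdf Q4 1"
  using cake_cdf_add[OF cake_cdf_add[OF cake_cdf_add], OF cake_cdf_scaled_ramp cake_cdf_scaled_ramp
      cake_cdf_scaled_ramp cake_cdf_scaled_ramp,
      of "1/7" "2/7" "1/4" "2/7" "3/7" "1/4" "4/7" "5/7" "1/4" "6/7" 1 "1/4"]
  by (simp add: Q4_def[abs_def])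

lemma cake_cdf_R4: "0 \<le> e \<Longrightarrow> e \<le> 1/2 \<Longrightarrow> cake_cdf (R4 e) 1"
  using cake_cdf_add[OF cake_cdf_add, OF cake_cdf_scaled_ramp cake_cdf_scaled_ramp cake_cdf_scaled_ramp,
      of 0 "1/7" "2*e" "1/7" "2/7" "1/2 - e" "6/7" 1 "1/2 - e"]
  by (simp add: R4_def[abs_def])

lemma cake_cdf_A4: "cake_cdf A4 1"
  using cake_cdf_scaled_ramp[of "3/7" "4/7" 1] by (simp add: A4_def)

lemma cake_cdf_B4: "cake_cdf B4 1"
  using cake_cdf_scaled_ramp[of "5/7" "6/7" 1] by (simp add: B4_def)

lemma Q4_values: "Q4 0 = 0" "Q4 (2/7) = 1/4" "Q4 (3/7) = 1/2" "Q4 (4/7) = 1/2" "Q4 (5/7) = 3/4"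
    "Q4 (6/7) = 3/4" "Q4 1 = 1"
  by (simp_all add: Q4_def ramp_def)

lemma R4_values: "R4 e 0 = 0" "R4 e (1/7) = 2*e" "R4 e (2/7) = 1/2 + e" "R4 e (6/7) = 1/2 + e"
    "R4 e 1 = 1"
  by (simp_all add: R4_def ramp_def)

lemma Q4_ge_if_R4_ge:
  assumes e: "0 < e" "e \<le> 1/30" and R: "1/2 - e \<le> R4 e t"
  shows "1/4 - 2*e \<le> Q4 t"
proof (cases "t \<le> 1/7")
  case True
  then have "R4 e t \<le> R4 e (1/7)"
    using e by (intro cake_cdf_mono[OF cake_cdf_R4]) auto
  then show ?thesis
    using R e by (simp add: R4_values)
next
  case t_gt: False
  show ?thesis
  proof (cases "2/7 \<le> t")
    case True
    then have "Q4 (2/7) \<le> Q4 t"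
      by (intro cake_cdf_mono[OF cake_cdf_Q4])
    then show ?thesis
      using e by (simp add: Q4_values)
  next
    case False
    define s where "s = ramp (1/7) (2/7) t"
    have "0 \<le> s" "s \<le> 1"
      unfolding s_def using ramp_bounds by auto
    moreover have "R4 e t = 2*e + (1/2 - e) * s" "Q4 t = s / 4"
      using t_gt False unfolding R4_def Q4_def s_def by (simp_all add: ramp_eq_0 ramp_eq_1)
    moreover have "1/4 * (1 - s) \<le> (1/2 - e) * (1 - s)"
      using e \<open>s \<le> 1\<close> by (intro mult_right_mono) auto
    ultimately show ?thesis
      using R e by (simp add: right_diff_distrib)
  qed
qed

lemma Q4_left_of_A4_left_of_B4:
  assumes e: "0 < e" and ends: "complete_division_ends 4 a b"
    and rich: "1/4 + 3*e < Q4 (b 0) - Q4 (a 0)" "1/4 + 3*e < A4 (b 2) - A4 (a 2)"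
      "1/4 + 3*e < B4 (b 3) - B4 (a 3)"
  shows "a 2 < 4/7" "a 3 < 6/7" "5/7 < b 3" "b 0 \<le> a 2" "b 2 \<le> a 3"
proof -
  note ordered = complete_division_endsD(4)[OF ends]
  note mono_Q = cake_cdf_mono[OF cake_cdf_Q4]
  have nonempty: "a 0 < b 0" "a 2 < b 2" "a 3 < b 3"
    using complete_division_ends_nonempty[OF ends _ _ rich(1)]
      complete_division_ends_nonempty[OF ends _ _ rich(2)]
      complete_division_ends_nonempty[OF ends _ _ rich(3)] e
    by simp_all
  have A_meets: "a 2 < 4/7" "3/7 < b 2"
    using ramp_increase_imp_overlap[of "3/7" "4/7" "a 2" "b 2"] rich(2) e complete_division_endsD(2)[OF ends]
    by (simp_all add: A4_def)
  have B_meets: "a 3 < 6/7" "5/7 < b 3"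
    using ramp_increase_imp_overlap[of "5/7" "6/7" "a 3" "b 3"] rich(3) e complete_division_endsD(2)[OF ends]
    by (simp_all add: B4_def)
  show "a 2 < 4/7" "a 3 < 6/7" "5/7 < b 3"
    using A_meets B_meets by simp_all
  show "b 2 \<le> a 3"
    using ordered[of 2 3] nonempty A_meets B_meets by auto
  show "b 0 \<le> a 2"
  proof (rule ccontr)
    assume "\<not> b 0 \<le> a 2"
    then have "3/7 \<le> a 0"
      using ordered[of 0 2] nonempty A_meets by auto
    from ordered[of 0 3] nonempty(1,3) consider "b 0 \<le> a 3" | "b 3 \<le> a 0"
      by auto
    then show False
    proof cases
      case 1
      then have "Q4 (3/7) \<le> Q4 (a 0)" "Q4 (b 0) \<le> Q4 (6/7)"
        using \<open>3/7 \<le> a 0\<close> B_meets by (auto intro!: mono_Q)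
      then show False
        using rich(1) e Q4_values by simp
    next
      case 2
      then have "Q4 (5/7) \<le> Q4 (a 0)" "Q4 (b 0) \<le> Q4 1"
        using B_meets complete_division_endsD(3)[OF ends, of 0] by (auto intro!: mono_Q)
      then show False
        using rich(1) e Q4_values by simp
    qed
  qed
qed

lemma no_rich_envy_free_ends_4:
  assumes e: "0 < e" "e \<le> 1/30"
    and ends: "complete_division_ends 4 a b"
    and R_envy_free: "\<forall>j<4. R4 e (b j) - R4 e (a j) \<le> R4 e (b 1) - R4 e (a 1)"
    and rich: "1/4 + 3*e < Q4 (b 0) - Q4 (a 0)" "1/4 + 3*e < R4 e (b 1) - R4 e (a 1)"
      "1/4 + 3*e < A4 (b 2) - A4 (a 2)" "1/4 + 3*e < B4 (b 3) - B4 (a 3)"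
  shows False
proof -
  note bounds = complete_division_endsD(1-3)[OF ends]
  note mono_Q = cake_cdf_mono[OF cake_cdf_Q4]
  have "cake_cdf (R4 e) 1"
    using e by (intro cake_cdf_R4) auto
  note mono_R = cake_cdf_mono[OF this]
  have nonempty: "a 0 < b 0" "a 1 < b 1" "a 2 < b 2" "a 3 < b 3"
    using complete_division_ends_nonempty[OF ends _ _ rich(1)]
      complete_division_ends_nonempty[OF ends _ _ rich(2)]
      complete_division_ends_nonempty[OF ends _ _ rich(3)]
      complete_division_ends_nonempty[OF ends _ _ rich(4)] e
    by simp_all
  note AB = Q4_left_of_A4_left_of_B4[OF e(1) ends rich(1,3,4)]
  from complete_division_endsD(4)[OF ends, of 0 1] nonempty(1,2)
  consider "b 0 \<le> a 1" | "b 1 \<le> a 0"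
    by auto
  then show False
  proof cases
    case 1
    have "a 0 = 0"
      using complete_division_endsD(5)[OF ends] 1 AB(4,5) nonempty bounds[of 0]
      by (auto simp: ex_less_4_iff)
    have "2/7 < b 0"
    proof (rule ccontr)
      assume "\<not> 2/7 < b 0"
      then have "Q4 (b 0) \<le> Q4 (2/7)"
        by (intro mono_Q) auto
      then show False
        using rich(1) e Q4_values \<open>a 0 = 0\<close> by simp
    qed
    then have "R4 e (2/7) \<le> R4 e (b 0)" "R4 e (2/7) \<le> R4 e (a 1)" "R4 e (b 1) \<le> R4 e 1"
      using 1 bounds[of 1] by (auto intro!: mono_R)
    then show False
      using R_envy_free[rule_format, of 0] \<open>a 0 = 0\<close> R4_values e by auto
  next
    case 2
    have "b 3 = 1"
      using complete_division_endsD(6)[OF ends] 2 AB nonempty bounds[of 3]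
      by (auto simp: ex_less_4_iff)
    have "R4 e (a 3) \<le> R4 e (6/7)"
      using AB(2) by (intro mono_R) auto
    then have "1/2 - e \<le> R4 e (b 1) - R4 e (a 1)"
      using R_envy_free[rule_format, of 3] \<open>b 3 = 1\<close> R4_values by auto
    moreover have "0 \<le> R4 e (a 1)" "R4 e (b 1) \<le> R4 e (a 0)"
      using 2 bounds[of 1] R4_values mono_R[of 0 "a 1"] by (auto intro!: mono_R)
    ultimately have "1/4 - 2*e \<le> Q4 (a 0)"
      using e by (intro Q4_ge_if_R4_ge) auto
    moreover have "Q4 (b 0) \<le> Q4 (4/7)"
      using AB(1,4) by (intro mono_Q) auto
    ultimately show False
      using rich(1) Q4_values e by simp
  qed
qed

lemma egalitarian_gap_4:
  assumes e: "0 < e" "e \<le> 1/30"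
  shows "\<exists>v. cake_instance 4 v \<and> egalitarian_gap 4 v (1/2 - e) (1/4 + 3*e)"
proof -
  define F where "F = (!) [Q4, R4 e, A4, B4]"
  define v where "v = (\<lambda>i. cake_measure (F i))"
  define a where "a = (!) [1/7, 6/7, 3/7, 5/7 :: real]"
  define b where "b = (!) [3/7, 1, 4/7, 6/7 :: real]"
  define Y where "Y = (\<lambda>i. {a i<..<b i})"
  have "\<forall>i<4. cake_cdf (F i) 1"
    using e cake_cdf_Q4 cake_cdf_R4[of e] cake_cdf_A4 cake_cdf_B4 by (simp add: all_less_4_iff F_def)
  then have cdf: "cake_cdf (F i) 1" if "i < 4" for i
    using that by blast
  have "\<forall>i<4. 0 < a i \<and> a i \<le> b i \<and> b i \<le> 1"
    "\<forall>i<4. \<forall>j<4. i \<noteq> j \<longrightarrow> b i \<le> a j \<or> b j \<le> a i"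
    by (simp_all add: all_less_4_iff a_def b_def)
  then have partial: "partial_division 4 Y" and ab: "\<And>j. j < 4 \<Longrightarrow> 0 \<le> a j \<and> a j \<le> b j \<and> b j \<le> 1"
    unfolding Y_def by (auto intro: partial_division_of_ends)
  have u_Y: "u v Y i j = F i (b j) - F i (a j)" if "i < 4" "j < 4" for i j
    unfolding v_def Y_def using cdf ab that by (intro u_cake_measures) auto
  have utilities: "\<forall>i<4. \<forall>j<4. u v Y i j \<le> u v Y i i \<and> 1/2 - e \<le> u v Y i i"
    using e by (simp add: u_Y all_less_4_iff F_def a_def b_def Q4_def R4_def A4_def B4_def ramp_def)
  have "envy_free 4 v Y" "1/2 - e \<le> eg 4 v Y"
    using utilities unfolding envy_free_def by (auto intro!: eg_geI)
  moreover have "eg 4 v X \<le> 1/4 + 3*e" if "complete_division 4 X" "envy_free 4 v X" for X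
    unfolding v_def
  proof (rule eg_complete_envy_free_le[OF _ cdf _ that[unfolded v_def]])
    fix a b
    assume ends: "complete_division_ends 4 a b"
      and "\<forall>i<4. \<forall>j<4. F i (b j) - F i (a j) \<le> F i (b i) - F i (a i)"
      and "\<forall>i<4. 1/4 + 3*e < F i (b i) - F i (a i)"
    then show False
      by (intro no_rich_envy_free_ends_4[OF e ends]) (simp_all add: all_less_4_iff F_def One_nat_def)
  qed auto
  moreover have "cake_instance 4 v"
    unfolding v_def using cdf by (rule cake_instance_cake_measures)
  ultimately show ?thesis
    unfolding egalitarian_gap_def using partial by blast
qed

theorem theorem3:
  fixes n :: nat and \<delta> :: real
  assumes "n \<in> {3, 4}" and "\<delta> > 0"
  shows "\<exists>v \<alpha>. cake_instance n v \<and> egalitarian_dumping_paradox n v \<alpha> \<and> \<alpha> \<ge> real n / 2 - \<delta>"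
proof -
  define e where "e = min \<delta> 1 / 30"
  have e: "0 < e" "e \<le> 1/30"
    using assms(2) by (auto simp: e_def)
  obtain v where v: "cake_instance n v" "egalitarian_gap n v (1/2 - e) (1 / real n + 3*e)"
    using assms(1) egalitarian_gap_3[OF e] egalitarian_gap_4[OF e] by auto
  have "0 < 1 / real n + 3*e" "1 / real n + 3*e < 1/2 - e"
    using assms(1) e by auto
  then have "egalitarian_dumping_paradox n v ((1/2 - e) / (1 / real n + 3*e))"
    by (intro egalitarian_dumping_paradox_if_gap[OF v(2)])
  moreover have "real n / 2 - \<delta> \<le> (1/2 - e) / (1 / real n + 3*e)"
    unfolding e_def using assms by (intro dumping_ratio_ge) auto
  ultimately show ?thesis
    using v(1) by blast
qed

end
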